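(* For every integer $k\ge1$ and $\tau\in T$: if $\mathfrak{h}_s(\tau)=k$ then $\rho(\tau)\ge k-\frac12$; if $\mathfrak{r}_s(\tau)=k$ then $\rho(\tau)\ge\frac32k-1$; if $\mathfrak{d}_s(\tau)=k$ then $\rho(\tau)\ge\frac34 2^k-1$. The same holds for $u\in U_f$ with $\mathfrak{h}_s',\mathfrak{r}_s',\mathfrak{d}_s'$ in place of $\mathfrak{h}_s,\mathfrak{r}_s,\mathfrak{d}_s$.
   Context: Let $m\ge0$. $T$: the empty tree $\emptyset$ and all $\tau=[\tau_1,\dots,\tau_\kappa]_l$ with $l\in\{0,\dots,m\}$, $\kappa\ge0$, $\tau_j\in T\setminus\{\emptyset\}$ unordered (new root of color $l$ joined to roots of the $\tau_j$; $\bullet_l$ if $\kappa=0$). Order: $\rho(\emptyset)=0$, $\rho([\tau_1,\dots,\tau_\kappa]_l)=\sum_j\rho(\tau_j)+1$ if $l=0$, $+\frac12$ if $l\ge1$. $U_f$: trees $u=[\tau_1,\dots,\tau_\kappa]_f$, $\kappa\ge0$, $\tau_j\in T\setminus\{\emptyset\}$, $\rho(u)=\sum_j\rho(\tau_j)$, $\mathfrak{g}'(u)=\max_j\mathfrak{g}(\tau_j)$. Maxima over empty sets are $0$. $\mathfrak{h}_s(\emptyset)=0$, $\mathfrak{h}_s([\tau_1,\dots,\tau_\kappa]_l)=1$ if $l>0$, $=1+\max_j\mathfrak{h}_s(\tau_j)$ if $l=0$. $\mathfrak{r}_s(\emptyset)=0$, $\mathfrak{r}_s(\bullet_l)=1$;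 for $\tau=[\tau_1,\dots,\tau_\kappa]_l$: $1$ if $l>0$; $\mathfrak{r}_s(\tau_1)$ if $l=0,\kappa=1$; $1+\max_j\mathfrak{r}_s(\tau_j)$ if $l=0,\kappa\ge2$. $\mathfrak{d}_s(\emptyset)=0$, $\mathfrak{d}_s(\bullet_l)=1$; for $\tau=[\tau_1,\dots,\tau_\kappa]_l$: $1$ if $l>0$; with $M=\max_j\mathfrak{d}_s(\tau_j)$, $M$ if $l=0$ and exactly one $i$ has $\mathfrak{d}_s(\tau_i)=M$, and $M+1$ if $l=0$ and at least two indices attain $M$. *)

theory Defs
  imports Main Complex_Main
begin

text \<open>Empty is the empty tree; Node l ts is the tree whose root
has colour l and whose subtrees are the trees in ts (children are unordered in the
paper; all functions below are invariant under permutation of ts).\<close>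
datatype ctree = Empty | Node nat "ctree list"

fun in_T :: "nat \<Rightarrow> ctree \<Rightarrow> bool" where
  "in_T m Empty = True"
| "in_T m (Node l ts) = (l \<le> m \<and> list_all (\<lambda>t. t \<noteq> Empty \<and> in_T m t) ts)"

definition maxl :: "nat list \<Rightarrow> nat" where
  "maxl xs = foldr max xs 0"

fun rho :: "ctree \<Rightarrow> real" where
  "rho Empty = 0"
| "rho (Node l ts) = sum_list (map rho ts) + (if l = 0 then 1 else 1/2)"

fun hs :: "ctree \<Rightarrow> nat" where
  "hs Empty = 0"
| "hs (Node l ts) = (if l > 0 then 1 else 1 + maxl (map hs ts))"

fun rs :: "ctree \<Rightarrow> nat" where
  "rs Empty = 0"
| "rs (Node l ts) =
     (if ts = [] then 1
      else if l > 0 then 1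
      else (case ts of [t] \<Rightarrow> rs t | _ \<Rightarrow> 1 + maxl (map rs ts)))"

fun ds :: "ctree \<Rightarrow> nat" where
  "ds Empty = 0"
| "ds (Node l ts) =
     (if ts = [] then 1
      else if l > 0 then 1
      else if length (filter (\<lambda>x. x = maxl (map ds ts)) (map ds ts)) = 1
           then maxl (map ds ts)
      else maxl (map ds ts) + 1)"

text \<open>Trees in U_f: u = [t_1,...,t_k]_f, represented by the list of its subtrees.\<close>
definition in_Uf :: "nat \<Rightarrow> ctree list \<Rightarrow> bool" where
  "in_Uf m us = list_all (\<lambda>t. t \<noteq> Empty \<and> in_T m t) us"

definition rho_U :: "ctree list \<Rightarrow> real" where
  "rho_U us = sum_list (map rho us)"

definition hs' :: "ctree list \<Rightarrow> nat" where "hs' us = maxl (map hs us)"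
definition rs' :: "ctree list \<Rightarrow> nat" where "rs' us = maxl (map rs us)"
definition ds' :: "ctree list \<Rightarrow> nat" where "ds' us = maxl (map ds us)"

end

theory Submission
  imports Defs
begin

text \<open>Each statistic can only grow at a colour-0 root, which costs 1 in order; this
alone gives the bound for h_s. For r_s the root must moreover have a second, nonempty
subtree, costing at least 1/2 more, so each increment costs 3/2. For d_s the root must
have two subtrees of maximal d_s, so \<rho> + 1 at least doubles with each increment. A tree
in U_f inherits each bound from a subtree attaining the maximum, since its order is a
sum of nonnegative terms. None of this needs k \<ge> 1.\<close>

lemma maxl_Nil [simp]: "maxl [] = 0"
  by (simp add: maxl_def)

lemma maxl_in: "xs \<noteq> [] \<Longrightarrow> maxl xs \<in> set xs"
  unfolding maxl_def
proof (induction xs)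
  case (Cons a xs)
  then show ?case by (cases "xs = []") (auto simp: max_def)
qed simp

lemma sum_list_map_filter_le:
  fixes f :: "'a \<Rightarrow> 'b::ordered_comm_monoid_add"
  assumes "\<And>x. x \<in> set xs \<Longrightarrow> 0 \<le> f x"
  shows "sum_list (map f (filter P xs)) \<le> sum_list (map f xs)"
  using assms by (induction xs) (auto intro: add_mono add_increasing)

lemma rho_nonneg: "0 \<le> rho t"
  by (induction t) (auto intro!: sum_list_nonneg add_nonneg_nonneg)

lemma sum_list_rho_nonneg: "0 \<le> sum_list (map rho ts)"
  by (rule sum_list_nonneg) (auto simp: rho_nonneg)

lemma rho_ge_half: "t \<noteq> Empty \<Longrightarrow> 1/2 \<le> rho t"
  using sum_list_rho_nonneg by (cases t) auto

lemma rho_le_sum_list: "t \<in> set ts \<Longrightarrow> rho t \<le> sum_list (map rho ts)"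
  by (rule member_le_sum_list) (auto simp: rho_nonneg)

lemma in_T_subtree: "in_T m (Node l ts) \<Longrightarrow> t \<in> set ts \<Longrightarrow> t \<noteq> Empty \<and> in_T m t"
  by (simp add: list_all_iff)

lemma in_Uf_subtree: "in_Uf m u \<Longrightarrow> t \<in> set u \<Longrightarrow> in_T m t"
  by (simp add: in_Uf_def list_all_iff)

text \<open>In the three inductions below, a coloured root or a leaf has all statistics 1, so
only a colour-0 root with subtrees needs an argument.\<close>

lemma rho_lower_bound_hs: "real (hs t) - 1/2 \<le> rho t"
proof (induction t)
  case (Node l ts)
  show ?case
  proof (cases "l = 0 \<and> ts \<noteq> []")
    case False
    then show ?thesis using sum_list_rho_nonneg by auto
  next
    case True
    then obtain t0 where t0: "t0 \<in> set ts" "hs t0 = maxl (map hs ts)"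
      using maxl_in[of "map hs ts"] by auto
    then show ?thesis
      using True Node.IH[OF t0(1)] rho_le_sum_list[OF t0(1)] by simp
  qed
qed simp

lemma rho_lower_bound_rs: "in_T m t \<Longrightarrow> 3/2 * real (rs t) - 1 \<le> rho t"
proof (induction t)
  case (Node l ts)
  have IH: "3/2 * real (rs t) - 1 \<le> rho t" and nonempty: "t \<noteq> Empty" if "t \<in> set ts" for t
    using Node.IH in_T_subtree[OF Node.prems that] that by auto
  show ?case
  proof (cases "l = 0 \<and> ts \<noteq> []")
    case False
    then show ?thesis using sum_list_rho_nonneg by auto
  next
    case True
    then have l: "l = 0" and ne: "ts \<noteq> []" by auto
    show ?thesis
    proof (cases "\<exists>a. ts = [a]")
      case True
      with l IH show ?thesis by auto
    next
      case False
      with ne obtain a b r where ts: "ts = a # b # r"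
        by (metis list.exhaust)
      have "maxl (map rs ts) \<in> rs ` set ts"
        using maxl_in[of "map rs ts"] ne by simp
      then obtain t0 where t0: "t0 \<in> set ts" "rs t0 = maxl (map rs ts)"
        by (metis imageE)
      have "remove1 t0 ts \<noteq> []"
        by (simp add: ts)
      then obtain t1 where t1: "t1 \<in> set (remove1 t0 ts)"
        using list.set_sel(1) by blast
      then have "t1 \<in> set ts"
        using set_remove1_subset by fast
      then have "1/2 \<le> rho t1"
        by (intro rho_ge_half nonempty)
      also have "\<dots> \<le> sum_list (map rho (remove1 t0 ts))"
        using t1 by (rule rho_le_sum_list)
      finally have "rho t0 + 1/2 \<le> sum_list (map rho ts)"
        using sum_list_map_remove1[OF t0(1), of rho] by simp
      moreover have "rs (Node l ts) = 1 + rs t0"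
        using l ts t0(2) by simp
      ultimately show ?thesis
        using l IH[OF t0(1)] by simp
    qed
  qed
qed simp

lemma rho_lower_bound_ds: "in_T m t \<Longrightarrow> 3/4 * 2 ^ ds t - 1 \<le> rho t"
proof (induction t)
  case (Node l ts)
  have IH: "3/4 * 2 ^ ds t - 1 \<le> rho t" if "t \<in> set ts" for t
    using Node.IH in_T_subtree[OF Node.prems that] that by auto
  show ?case
  proof (cases "l = 0 \<and> ts \<noteq> []")
    case False
    then show ?thesis using sum_list_rho_nonneg by auto
  next
    case True
    then have l: "l = 0" and ne: "ts \<noteq> []" by auto
    define M where "M = maxl (map ds ts)"
    define tops where "tops = filter (\<lambda>t. ds t = M) ts"
    obtain t0 where t0: "t0 \<in> set ts" "ds t0 = M"
      using maxl_in[of "map ds ts"] ne M_def by auto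
    have count: "length (filter (\<lambda>x. x = M) (map ds ts)) = length tops"
      by (simp add: tops_def filter_map o_def)
    show ?thesis
    proof (cases "length tops = 1")
      case True
      with l ne count M_def have "ds (Node l ts) = M" by simp
      with l IH[OF t0(1)] rho_le_sum_list[OF t0(1)] t0(2) show ?thesis by simp
    next
      case False
      with l ne count M_def have ds_root: "ds (Node l ts) = M + 1" by simp
      have "t0 \<in> set tops" using t0 by (simp add: tops_def)
      with False obtain a b r where tops: "tops = a # b # r"
        by (cases tops; cases "tl tops") auto
      have "set tops \<subseteq> set ts" "\<forall>t\<in>set tops. ds t = M" by (auto simp: tops_def)
      with tops have "2 * (3/4 * 2 ^ M - 1) \<le> rho a + rho b"
        using IH[of a] IH[of b] by auto
      also have "\<dots> \<le> sum_list (map rho tops)"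
        using tops sum_list_rho_nonneg[of r] by simp
      also have "\<dots> \<le> sum_list (map rho ts)"
        unfolding tops_def by (rule sum_list_map_filter_le) (simp add: rho_nonneg)
      finally show ?thesis using ds_root l by simp
    qed
  qed
qed simp

lemma sum_list_lower_bound_maxl:
  fixes B :: "nat \<Rightarrow> real"
  assumes "\<And>t. t \<in> set ts \<Longrightarrow> B (g t) \<le> rho t" and "B 0 \<le> 0"
  shows "B (maxl (map g ts)) \<le> sum_list (map rho ts)"
proof (cases "ts = []")
  case False
  then obtain t0 where "t0 \<in> set ts" "g t0 = maxl (map g ts)"
    using maxl_in[of "map g ts"] by auto
  then show ?thesis using assms(1) rho_le_sum_list by (metis order_trans)
qed (use assms(2) in simp)

lemma rho_U_lower_bound_hs': "real (hs' u) - 1/2 \<le> rho_U u"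
  unfolding hs'_def rho_U_def
  by (rule sum_list_lower_bound_maxl[where B = "\<lambda>k. real k - 1/2"])
    (use rho_lower_bound_hs in auto)

lemma rho_U_lower_bound_rs':
  assumes "in_Uf m u"
  shows "3/2 * real (rs' u) - 1 \<le> rho_U u"
  unfolding rs'_def rho_U_def
  by (rule sum_list_lower_bound_maxl[where B = "\<lambda>k. 3/2 * real k - 1"])
    (use rho_lower_bound_rs[OF in_Uf_subtree[OF assms]] in auto)

lemma rho_U_lower_bound_ds':
  assumes "in_Uf m u"
  shows "3/4 * 2 ^ ds' u - 1 \<le> rho_U u"
  unfolding ds'_def rho_U_def
  by (rule sum_list_lower_bound_maxl[where B = "\<lambda>k. 3/4 * 2 ^ k - 1"])
    (use rho_lower_bound_ds[OF in_Uf_subtree[OF assms]] in auto)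

theorem mainTheorem9:
  fixes m k :: nat and t :: ctree and u :: "ctree list"
  assumes "k \<ge> 1" and "in_T m t" and "in_Uf m u"
  shows "(hs t = k \<longrightarrow> rho t \<ge> real k - 1/2)
       \<and> (rs t = k \<longrightarrow> rho t \<ge> 3/2 * real k - 1)
       \<and> (ds t = k \<longrightarrow> rho t \<ge> 3/4 * 2 ^ k - 1)
       \<and> (hs' u = k \<longrightarrow> rho_U u \<ge> real k - 1/2)
       \<and> (rs' u = k \<longrightarrow> rho_U u \<ge> 3/2 * real k - 1)
       \<and> (ds' u = k \<longrightarrow> rho_U u \<ge> 3/4 * 2 ^ k - 1)"
  using rho_lower_bound_hs[of t] rho_lower_bound_rs[OF assms(2)] rho_lower_bound_ds[OF assms(2)]
    rho_U_lower_bound_hs'[of u] rho_U_lower_bound_rs'[OF assms(3)] rho_U_lower_bound_ds'[OF assms(3)]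
  by blast

end
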